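(* Let $k$ be a field, $X=\mathbb P^{n_1}_k\times\cdots\times\mathbb P^{n_s}_k$ with $\mathbb Z^s$-graded coordinate ring $R=k[x_{i,j}: 1\le i\le s,\ 0\le j\le n_i]$ and irrelevant ideal $B=B_1\cdots B_s$, $B_i=(x_{i,0},\ldots,x_{i,n_i})$. Let $A=k[T_1,\ldots,T_r]$, $S=R[T_1,\ldots,T_r]$ graded by $\mathbb Z^s\times\mathbb Z$ (with $\deg T_i=(0,1)$), let $J\subseteq S$ be an ideal generated by finitely many homogeneous elements, $\mathcal S=S/J$, and let $\mathfrak A(J):=(J:B^\infty)\cap A$. For $\nu\in\mathbb Z^s$ write $\mathcal S_\nu=\bigoplus_{t}\mathcal S_{(\nu,t)}$, a finitely generated graded $A$-module. If $\nu\in\mathbb N^s$ satisfies $H^0_B(\mathcal S)_\nu=0$, then $\mathfrak A(J)=\mathrm{ann}_A(\mathcal S_\nu)$, and there exists an integer $n_\nu$ such that $$\mathfrak A(J)^{n_\nu}\subseteq \mathrm{Fitt}^0_A(\mathcal S_\nu)\subseteq\mathfrak A(J).$$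
   Context: $\mathrm{Fitt}^0_A(M)$ is the initial Fitting ideal of a finitely presented $A$-module $M$ (ideal of maximal minors of a presentation matrix). $\mathfrak A(J)$ defines the image $\pi_2(\Gamma)$ of the subscheme $\Gamma\subseteq X\times\mathbb P^{r-1}_k$ defined by $J$ under the second projection. *)

theory Defs
  imports "HOL-Library.Poly_Mapping" "HOL-Combinatorics.Permutations"
begin

text \<open>Variables of S = R[T_1,...,T_r]: X i j stands for x_{i,j} (0-based factor
  index i), T l stands for T_{l+1} (0-based).\<close>
datatype var = X nat nat | T nat

type_synonym 'k mpoly = "(var \<Rightarrow>\<^sub>0 nat) \<Rightarrow>\<^sub>0 'k"

definition valid_var :: "nat \<Rightarrow> nat list \<Rightarrow> nat \<Rightarrow> var \<Rightarrow> bool" where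
  "valid_var s ns r v = (case v of X i j \<Rightarrow> i < s \<and> j \<le> ns ! i | T l \<Rightarrow> l < r)"

definition Sring :: "nat \<Rightarrow> nat list \<Rightarrow> nat \<Rightarrow> ('k::field) mpoly set" where
  "Sring s ns r = {f. \<forall>m \<in> Poly_Mapping.keys f. \<forall>v \<in> Poly_Mapping.keys m. valid_var s ns r v}"

definition Aring :: "nat \<Rightarrow> ('k::field) mpoly set" where
  "Aring r = {f. \<forall>m \<in> Poly_Mapping.keys f. \<forall>v \<in> Poly_Mapping.keys m. \<exists>l. v = T l \<and> l < r}"

definition var_poly :: "var \<Rightarrow> ('k::field) mpoly" where
  "var_poly v = Poly_Mapping.single (Poly_Mapping.single v 1) 1"

definition xdeg :: "nat \<Rightarrow> nat list \<Rightarrow> (var \<Rightarrow>\<^sub>0 nat) \<Rightarrow> nat list" where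
  "xdeg s ns m = map (\<lambda>i. \<Sum>j\<le>ns ! i. Poly_Mapping.lookup m (X i j)) [0..<s]"

definition tdeg :: "nat \<Rightarrow> (var \<Rightarrow>\<^sub>0 nat) \<Rightarrow> nat" where
  "tdeg r m = (\<Sum>l<r. Poly_Mapping.lookup m (T l))"

definition homog :: "nat \<Rightarrow> nat list \<Rightarrow> nat \<Rightarrow> nat list \<Rightarrow> nat \<Rightarrow> ('k::field) mpoly \<Rightarrow> bool" where
  "homog s ns r mu t f = (\<forall>m \<in> Poly_Mapping.keys f. xdeg s ns m = mu \<and> tdeg r m = t)"

definition Spiece :: "nat \<Rightarrow> nat list \<Rightarrow> nat \<Rightarrow> nat list \<Rightarrow> ('k::field) mpoly set" where
  "Spiece s ns r nu = {f \<in> Sring s ns r. \<forall>m \<in> Poly_Mapping.keys f. xdeg s ns m = nu}"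

definition gen_ideal :: "'a::comm_ring_1 set \<Rightarrow> 'a set \<Rightarrow> 'a set" where
  "gen_ideal C G = {(\<Sum>i<k. c i * g i) | (k::nat) c g. \<forall>i<k. c i \<in> C \<and> g i \<in> G}"

definition ideal_pow :: "'a::comm_ring_1 set \<Rightarrow> 'a set \<Rightarrow> nat \<Rightarrow> 'a set" where
  "ideal_pow C I n = gen_ideal C {(\<Prod>i<n. a i) | (a::nat \<Rightarrow> _). \<forall>i<n. a i \<in> I}"

definition Bi :: "nat \<Rightarrow> nat list \<Rightarrow> nat \<Rightarrow> nat \<Rightarrow> ('k::field) mpoly set" where
  "Bi s ns r i = gen_ideal (Sring s ns r) {var_poly (X i j) | j. j \<le> ns ! i}"

definition Birr :: "nat \<Rightarrow> nat list \<Rightarrow> nat \<Rightarrow> ('k::field) mpoly set" where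
  "Birr s ns r = gen_ideal (Sring s ns r) {(\<Prod>i<s. b i) | (b::nat \<Rightarrow> _). \<forall>i<s. b i \<in> Bi s ns r i}"

definition saturation :: "nat \<Rightarrow> nat list \<Rightarrow> nat \<Rightarrow> ('k::field) mpoly set \<Rightarrow> 'k mpoly set" where
  "saturation s ns r J = {f \<in> Sring s ns r. \<exists>e. \<forall>b \<in> ideal_pow (Sring s ns r) (Birr s ns r) e. b * f \<in> J}"

definition frakA :: "nat \<Rightarrow> nat list \<Rightarrow> nat \<Rightarrow> ('k::field) mpoly set \<Rightarrow> 'k mpoly set" where
  "frakA s ns r J = saturation s ns r J \<inter> Aring r"

text \<open>H^0_B(S/J)_nu = 0: every element of (S/J)_nu killed by a power of B is zero,
  i.e. (J:B^\<infinity>) \<inter> S_nu \<subseteq> J.\<close>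
definition H0B_piece_zero :: "nat \<Rightarrow> nat list \<Rightarrow> nat \<Rightarrow> ('k::field) mpoly set \<Rightarrow> nat list \<Rightarrow> bool" where
  "H0B_piece_zero s ns r J nu = (\<forall>f \<in> Spiece s ns r nu. f \<in> saturation s ns r J \<longrightarrow> f \<in> J)"

text \<open>ann_A((S/J)_nu), where (S/J)_nu = S_nu / (J \<inter> S_nu).\<close>
definition ann_piece :: "nat \<Rightarrow> nat list \<Rightarrow> nat \<Rightarrow> ('k::field) mpoly set \<Rightarrow> nat list \<Rightarrow> 'k mpoly set" where
  "ann_piece s ns r J nu = {a \<in> Aring r. \<forall>f \<in> Spiece s ns r nu. a * f \<in> J}"

definition detn :: "nat \<Rightarrow> (nat \<Rightarrow> nat \<Rightarrow> 'a::comm_ring_1) \<Rightarrow> 'a" where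
  "detn n M = (\<Sum>p \<in> {p. p permutes {..<n}}. of_int (sign p) * (\<Prod>i<n. M i (p i)))"

text \<open>Module M = Mset / N over the ring C (Mset a C-module inside an ambient ring,
  N \<subseteq> Mset a submodule).\<close>
definition generates :: "'a::comm_ring_1 set \<Rightarrow> 'a set \<Rightarrow> 'a set \<Rightarrow> 'a list \<Rightarrow> bool" where
  "generates C Mset N gs = (set gs \<subseteq> Mset \<and>
     (\<forall>f \<in> Mset. \<exists>a. (\<forall>i<length gs. a i \<in> C) \<and> f - (\<Sum>i<length gs. a i * gs ! i) \<in> N))"

definition relations :: "'a::comm_ring_1 set \<Rightarrow> 'a set \<Rightarrow> 'a list \<Rightarrow> (nat \<Rightarrow> 'a) set" where
  "relations C N gs = {a. (\<forall>i<length gs. a i \<in> C) \<and> (\<forall>i\<ge>length gs. a i = 0)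
       \<and> (\<Sum>i<length gs. a i * gs ! i) \<in> N}"

text \<open>Fitt^0 w.r.t. generators gs: ideal generated by the maximal minors of the
  presentation matrix whose rows are all relations, i.e. by det of all n x n
  matrices whose rows are relations (n = number of generators).\<close>
definition fitt0_wrt :: "'a::comm_ring_1 set \<Rightarrow> 'a set \<Rightarrow> 'a list \<Rightarrow> 'a set" where
  "fitt0_wrt C N gs = gen_ideal C
     {detn (length gs) (\<lambda>i j. rows i j) | rows. \<forall>i<length gs. rows i \<in> relations C N gs}"

text \<open>Fitt^0_C(Mset/N), computed from some finite generating list (it is independent
  of the choice).\<close>
definition fitt0 :: "'a::comm_ring_1 set \<Rightarrow> 'a set \<Rightarrow> 'a set \<Rightarrow> 'a set" where
  "fitt0 C Mset N = fitt0_wrt C N (SOME gs. generates C Mset N gs)"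

end

theory Submission
  imports Defs "Jordan_Normal_Form.Determinant"
begin

text \<open>
  Write \<open>P\<close> for the piece \<open>S\<^sub>\<nu>\<close> and \<open>N = J \<inter> P\<close>. Monomial by monomial, every polynomial all of
  whose monomials have \<open>x\<close>-degree \<open>\<ge> \<nu>\<close> componentwise lies in the \<open>S\<close>-ideal generated by \<open>P\<close>;
  in particular \<open>B\<^bsup>|\<nu>|\<^esup>\<close> does. Hence \<open>a \<in> A\<close> kills \<open>P/N\<close> iff \<open>a\<close> is killed modulo \<open>J\<close> by a power
  of \<open>B\<close>, where for the direction from \<open>\<AA>(J)\<close> to the annihilator one uses that \<open>a P \<subseteq> P\<close> and
  that \<open>H\<^sup>0\<^sub>B(S/J)\<^sub>\<nu> = 0\<close>. The \<open>A\<close>-module \<open>P/N\<close> is generated by the finitely many \<open>x\<close>-monomials of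
  degree \<open>\<nu>\<close>, and for any module with \<open>n\<close> generators the Fitting ideal lies between the
  \<open>n\<close>-th power of the annihilator (diagonal relation matrices) and the annihilator itself
  (multiplying a relation matrix by its adjugate).
\<close>

definition is_subring :: "'a::comm_ring_1 set \<Rightarrow> bool" where
  "is_subring C \<longleftrightarrow> 0 \<in> C \<and> 1 \<in> C \<and> (\<forall>x\<in>C. \<forall>y\<in>C. x + y \<in> C \<and> x * y \<in> C \<and> - x \<in> C)"

definition is_submodule :: "'a::comm_ring_1 set \<Rightarrow> 'a set \<Rightarrow> bool" where
  "is_submodule C I \<longleftrightarrow> 0 \<in> I \<and> (\<forall>x\<in>I. \<forall>y\<in>I. x + y \<in> I) \<and> (\<forall>c\<in>C. \<forall>x\<in>I. c * x \<in> I)"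

lemma subring_sum: "is_subring C \<Longrightarrow> (\<And>i. i \<in> A \<Longrightarrow> f i \<in> C) \<Longrightarrow> sum f A \<in> C"
  by (induction A rule: infinite_finite_induct) (auto simp: is_subring_def)

lemma subring_prod: "is_subring C \<Longrightarrow> (\<And>i. i \<in> A \<Longrightarrow> f i \<in> C) \<Longrightarrow> prod f A \<in> C"
  by (induction A rule: infinite_finite_induct) (auto simp: is_subring_def)

lemma submodule_sum: "is_submodule C I \<Longrightarrow> (\<And>i. i \<in> A \<Longrightarrow> f i \<in> I) \<Longrightarrow> sum f A \<in> I"
  by (induction A rule: infinite_finite_induct) (auto simp: is_submodule_def)

lemma submodule_Int: "is_submodule C I \<Longrightarrow> is_submodule C I' \<Longrightarrow> is_submodule C (I \<inter> I')"
  unfolding is_submodule_def by blast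

lemma gen_ideal_subset:
  assumes "is_submodule C I" "G \<subseteq> I" shows "gen_ideal C G \<subseteq> I"
proof
  fix x assume "x \<in> gen_ideal C G"
  then obtain k c g where x: "x = (\<Sum>i<(k::nat). c i * g i)" and cg: "\<forall>i<k. c i \<in> C \<and> g i \<in> G"
    unfolding gen_ideal_def by blast
  show "x \<in> I" unfolding x
    by (rule submodule_sum[OF assms(1)]) (use assms cg in \<open>auto simp: is_submodule_def\<close>)
qed

lemma gen_ideal_subset_subring: "is_subring C \<Longrightarrow> G \<subseteq> C \<Longrightarrow> gen_ideal C G \<subseteq> C"
  unfolding gen_ideal_def by (auto intro!: subring_sum simp: is_subring_def)

lemma gen_ideal_generator: "is_subring C \<Longrightarrow> g \<in> G \<Longrightarrow> g \<in> gen_ideal C G"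
  unfolding gen_ideal_def is_subring_def
  by (intro CollectI exI[of _ 1] exI[of _ "\<lambda>_. 1"] exI[of _ "\<lambda>_. g"]) auto

lemma sum_lessThan_add: "(\<Sum>i<(k1::nat)+k2. f i) = (\<Sum>i<k1. f i) + (\<Sum>i<k2. f (k1 + i))"
  by (induction k2) (auto simp: add.assoc)

lemma submodule_gen_ideal:
  assumes "is_subring C" shows "is_submodule C (gen_ideal C G)"
  unfolding is_submodule_def
proof (intro conjI ballI)
  show "0 \<in> gen_ideal C G" unfolding gen_ideal_def by force
next
  fix x y assume "x \<in> gen_ideal C G" "y \<in> gen_ideal C G"
  then obtain k1 c1 g1 k2 c2 g2
    where x: "x = (\<Sum>i<(k1::nat). c1 i * g1 i)" and cg1: "\<forall>i<k1. c1 i \<in> C \<and> g1 i \<in> G"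
      and y: "y = (\<Sum>i<(k2::nat). c2 i * g2 i)" and cg2: "\<forall>i<k2. c2 i \<in> C \<and> g2 i \<in> G"
    unfolding gen_ideal_def by blast
  define c where "c i = (if i < k1 then c1 i else c2 (i - k1))" for i
  define g where "g i = (if i < k1 then g1 i else g2 (i - k1))" for i
  have "x + y = (\<Sum>i<k1+k2. c i * g i)"
    unfolding sum_lessThan_add x y c_def g_def by simp
  moreover have "\<forall>i<k1+k2. c i \<in> C \<and> g i \<in> G" using cg1 cg2 unfolding c_def g_def by auto
  ultimately show "x + y \<in> gen_ideal C G" unfolding gen_ideal_def by blast
next
  fix a x assume a: "a \<in> C" and "x \<in> gen_ideal C G"
  then obtain k c g where x: "x = (\<Sum>i<(k::nat). c i * g i)" and cg: "\<forall>i<k. c i \<in> C \<and> g i \<in> G"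
    unfolding gen_ideal_def by blast
  have "a * x = (\<Sum>i<k. (a * c i) * g i)" unfolding x by (simp add: sum_distrib_left mult.assoc)
  moreover have "\<forall>i<k. a * c i \<in> C \<and> g i \<in> G" using cg a assms by (auto simp: is_subring_def)
  ultimately show "a * x \<in> gen_ideal C G" unfolding gen_ideal_def
    by (intro CollectI exI[of _ k] exI[of _ "\<lambda>i. a * c i"] exI[of _ g]) auto
qed

section \<open>Determinants\<close>

lemma detn_eq_det: "detn n M = det (mat n n (\<lambda>(i,j). M i j))"
proof -
  have "detn n M = (\<Sum>p \<in> {p. p permutes {0..<n}}.
          of_int (sign p) * (\<Prod>i = 0..<n. mat n n (\<lambda>(i,j). M i j) $$ (i, p i)))"
    unfolding detn_def atLeast0LessThan
  proof (rule sum.cong[OF refl])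
    fix p assume "p \<in> {p. p permutes {..<n}}"
    then have p: "p permutes {..<n}" by simp
    show "of_int (sign p) * (\<Prod>i<n. M i (p i))
        = of_int (sign p) * (\<Prod>i<n. mat n n (\<lambda>(i,j). M i j) $$ (i, p i))"
      by (intro arg_cong[where f="\<lambda>x. _ * x"] prod.cong refl) (use permutes_in_image[OF p] in auto)
  qed
  then show ?thesis using det_def'[of "mat n n (\<lambda>(i,j). M i j)" n] by simp
qed

lemma det_in_subring:
  assumes C: "is_subring C" and B: "B \<in> carrier_mat n n"
    and entries: "\<And>i j. i < n \<Longrightarrow> j < n \<Longrightarrow> B $$ (i,j) \<in> C"
  shows "det B \<in> C"
  unfolding det_def'[OF B]
proof (rule subring_sum[OF C])
  fix p assume "p \<in> {p. p permutes {0..<n}}"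
  then have p: "p permutes {0..<n}" by simp
  have "(\<Prod>i = 0..<n. B $$ (i, p i)) \<in> C"
    by (rule subring_prod[OF C]) (use entries permutes_in_image[OF p] in auto)
  moreover have "(of_int (sign p) :: 'a) \<in> C" using C unfolding sign_def is_subring_def by auto
  ultimately show "of_int (sign p) * (\<Prod>i = 0..<n. B $$ (i, p i)) \<in> C"
    using C unfolding is_subring_def by blast
qed

lemma detn_in_subring:
  assumes "is_subring C" and "\<And>i j. i < n \<Longrightarrow> j < n \<Longrightarrow> M i j \<in> C"
  shows "detn n M \<in> C"
  unfolding detn_eq_det by (rule det_in_subring[OF assms(1)]) (use assms(2) in auto)

lemma cofactor_in_subring:
  assumes C: "is_subring C" and entries: "\<And>i j. i < n \<Longrightarrow> j < n \<Longrightarrow> M i j \<in> C"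
  shows "cofactor (mat n n (\<lambda>(i,j). M i j)) i j \<in> C"
proof -
  have "det (mat_delete (mat n n (\<lambda>(i,j). M i j)) i j) \<in> C"
    by (rule det_in_subring[OF C, of _ "n - 1"]) (use entries in \<open>auto simp: mat_delete_def\<close>)
  moreover have "(-1::'a) ^ k \<in> C" for k
    by (induction k) (use C in \<open>auto simp: is_subring_def\<close>)
  ultimately show ?thesis unfolding cofactor_def using C is_subring_def by blast
qed

text \<open>Cramer's rule: if the rows of \<open>M\<close> are relations among \<open>g\<close> modulo \<open>I\<close>, then \<open>det M\<close>
  kills every \<open>g j\<close> modulo \<open>I\<close>, because the adjugate of \<open>M\<close> times \<open>M\<close> is \<open>det M\<close> times the identity.\<close>
lemma detn_mult_in_submodule:
  assumes C: "is_subring C" and I: "is_submodule C I"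
    and entries: "\<And>i j. i < n \<Longrightarrow> j < n \<Longrightarrow> M i j \<in> C"
    and rel: "\<And>i. i < n \<Longrightarrow> (\<Sum>k<n. M i k * g k) \<in> I"
    and j: "j < n"
  shows "detn n M * g j \<in> I"
proof -
  define Mt where "Mt = mat n n (\<lambda>(i,j). M i j)"
  have Mt: "Mt \<in> carrier_mat n n" unfolding Mt_def by simp
  have adj_col: "(\<Sum>i<n. cofactor Mt i j * M i k) = (if j = k then detn n M else 0)"
    if k: "k < n" for k
  proof -
    have "(adj_mat Mt * Mt) $$ (j,k) = (det Mt \<cdot>\<^sub>m 1\<^sub>m n) $$ (j,k)"
      using adj_mat(3)[OF Mt] by simp
    moreover have "(adj_mat Mt * Mt) $$ (j,k) = (\<Sum>i<n. cofactor Mt i j * M i k)"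
      using j k Mt by (simp add: adj_mat_def scalar_prod_def Mt_def atLeast0LessThan)
    moreover have "(det Mt \<cdot>\<^sub>m 1\<^sub>m n) $$ (j,k) = (if j = k then detn n M else 0)"
      using j k by (simp add: detn_eq_det Mt_def)
    ultimately show ?thesis by simp
  qed
  have "detn n M * g j = (\<Sum>k<n. (if j = k then detn n M else 0) * g k)"
    using j by (simp add: if_distrib[of "\<lambda>x. x * _"] cong: if_cong)
  also have "\<dots> = (\<Sum>k<n. \<Sum>i<n. cofactor Mt i j * M i k * g k)"
    by (intro sum.cong refl) (simp add: adj_col[symmetric] sum_distrib_right)
  also have "\<dots> = (\<Sum>i<n. cofactor Mt i j * (\<Sum>k<n. M i k * g k))"
    by (subst sum.swap) (simp add: sum_distrib_left mult.assoc)
  also have "\<dots> \<in> I"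
    using rel I cofactor_in_subring[OF C entries]
    by (intro submodule_sum[OF I]) (auto simp: Mt_def is_submodule_def)
  finally show ?thesis .
qed

lemma detn_diagonal: "detn n (\<lambda>i j. if j = i then a i else 0) = (\<Prod>i<n. a i)"
proof -
  have off_diagonal: "(\<Prod>i<n. if p i = i then a i else 0) = 0"
    if "p permutes {..<n}" "p \<noteq> id" for p
  proof -
    have "\<exists>i<n. p i \<noteq> i"
      using that unfolding permutes_def by (metis eq_id_iff lessThan_iff)
    then show ?thesis by (intro prod_zero) auto
  qed
  have "detn n (\<lambda>i j. if j = i then a i else 0)
     = of_int (sign (id::nat\<Rightarrow>nat)) * (\<Prod>i<n. if id i = i then a i else 0)
       + (\<Sum>p \<in> {p. p permutes {..<n}} - {id}. of_int (sign p) * (\<Prod>i<n. if p i = i then a i else 0))"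
    unfolding detn_def by (subst sum.remove[of _ id]) (auto simp: permutes_id finite_permutations)
  also have "\<dots> = (\<Prod>i<n. a i)" using off_diagonal by simp
  finally show ?thesis .
qed

section \<open>Fitting ideals and annihilators\<close>

definition annihilator :: "'a::comm_ring_1 set \<Rightarrow> 'a set \<Rightarrow> 'a set \<Rightarrow> 'a set" where
  "annihilator C Mset N = {a \<in> C. \<forall>f \<in> Mset. a * f \<in> N}"

lemma submodule_annihilator:
  assumes C: "is_subring C" and N: "is_submodule C N"
  shows "is_submodule C (annihilator C Mset N)"
  using assms unfolding is_submodule_def is_subring_def annihilator_def
  by (auto simp: distrib_right mult.assoc)

lemma fitt0_wrt_subset_annihilator:
  assumes C: "is_subring C" and N: "is_submodule C N" and gs: "generates C Mset N gs"
  shows "fitt0_wrt C N gs \<subseteq> annihilator C Mset N"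
  unfolding fitt0_wrt_def
proof (rule gen_ideal_subset[OF submodule_annihilator[OF C N]], safe)
  fix rows assume rows: "\<forall>i<length gs. rows i \<in> relations C N gs"
  let ?n = "length gs" and ?d = "detn (length gs) rows"
  have entries: "rows i j \<in> C" if "i < ?n" "j < ?n" for i j
    using rows that unfolding relations_def by blast
  have dC: "?d \<in> C" by (rule detn_in_subring[OF C entries])
  have kills: "?d * gs ! j \<in> N" if "j < ?n" for j
    by (rule detn_mult_in_submodule[OF C N entries _ that])
      (use rows in \<open>auto simp: relations_def\<close>)
  have "?d * f \<in> N" if f: "f \<in> Mset" for f
  proof -
    obtain a where a: "\<forall>i<?n. a i \<in> C" "f - (\<Sum>i<?n. a i * gs ! i) \<in> N"
      using gs f unfolding generates_def by blast
    have "?d * f = ?d * (f - (\<Sum>i<?n. a i * gs ! i)) + (\<Sum>i<?n. a i * (?d * gs ! i))"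
      by (simp add: right_diff_distrib sum_distrib_left mult.left_commute)
    also have "\<dots> \<in> N"
    proof -
      have "?d * (f - (\<Sum>i<?n. a i * gs ! i)) \<in> N" using N dC a(2) unfolding is_submodule_def by blast
      moreover have "(\<Sum>i<?n. a i * (?d * gs ! i)) \<in> N"
        using N a(1) kills unfolding is_submodule_def by (intro submodule_sum[OF N]) auto
      ultimately show ?thesis using N unfolding is_submodule_def by blast
    qed
    finally show ?thesis .
  qed
  then show "?d \<in> annihilator C Mset N" using dC unfolding annihilator_def by blast
qed

lemma annihilator_pow_subset_fitt0_wrt:
  assumes C: "is_subring C" and gs: "generates C Mset N gs"
  shows "ideal_pow C (annihilator C Mset N) (length gs) \<subseteq> fitt0_wrt C N gs"
  unfolding ideal_pow_def fitt0_wrt_def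
proof (rule gen_ideal_subset[OF submodule_gen_ideal[OF C]], safe)
  fix a :: "nat \<Rightarrow> 'a" assume a: "\<forall>i<length gs. a i \<in> annihilator C Mset N"
  define rows where "rows i j = (if j = i then a i else 0)" for i j
  have "rows i \<in> relations C N gs" if i: "i < length gs" for i
  proof -
    have "(\<Sum>k<length gs. rows i k * gs ! k) = a i * gs ! i"
      using i by (simp add: rows_def if_distrib[of "\<lambda>x. x * _"] cong: if_cong)
    moreover have "a i * gs ! i \<in> N"
      using a i gs nth_mem[OF i] unfolding annihilator_def generates_def by blast
    ultimately show ?thesis
      using a i C unfolding relations_def rows_def annihilator_def is_subring_def by auto
  qed
  then have "detn (length gs) (\<lambda>i j. rows i j)
      \<in> gen_ideal C {detn (length gs) (\<lambda>i j. rows i j) | rows. \<forall>i<length gs. rows i \<in> relations C N gs}"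
    by (intro gen_ideal_generator[OF C]) auto
  then show "(\<Prod>i<length gs. a i)
      \<in> gen_ideal C {detn (length gs) (\<lambda>i j. rows i j) | rows. \<forall>i<length gs. rows i \<in> relations C N gs}"
    unfolding rows_def detn_diagonal .
qed

definition polys_in_vars :: "(var \<Rightarrow> bool) \<Rightarrow> ('k::field) mpoly set" where
  "polys_in_vars P = {f. \<forall>m \<in> Poly_Mapping.keys f. \<forall>v \<in> Poly_Mapping.keys m. P v}"

lemma keys_add_monomial:
  "Poly_Mapping.keys ((a::var \<Rightarrow>\<^sub>0 nat) + b) = Poly_Mapping.keys a \<union> Poly_Mapping.keys b"
  by (auto simp: in_keys_iff lookup_add)

lemma subring_polys_in_vars: "is_subring (polys_in_vars P)"
  unfolding is_subring_def polys_in_vars_def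
proof (intro conjI ballI; (elim CollectE)?)
  fix x y :: "'k::field mpoly"
  assume x: "\<forall>m\<in>Poly_Mapping.keys x. \<forall>v\<in>Poly_Mapping.keys m. P v"
    and y: "\<forall>m\<in>Poly_Mapping.keys y. \<forall>v\<in>Poly_Mapping.keys m. P v"
  show "x + y \<in> {f. \<forall>m\<in>Poly_Mapping.keys f. \<forall>v\<in>Poly_Mapping.keys m. P v}"
    using x y keys_add[of x y] by blast
  show "- x \<in> {f. \<forall>m\<in>Poly_Mapping.keys f. \<forall>v\<in>Poly_Mapping.keys m. P v}"
    using x by simp
  show "x * y \<in> {f. \<forall>m\<in>Poly_Mapping.keys f. \<forall>v\<in>Poly_Mapping.keys m. P v}"
    using x y keys_mult[of x y] by (force simp: keys_add_monomial)
qed auto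

lemma subring_Sring: "is_subring (Sring s ns r)"
  using subring_polys_in_vars[of "valid_var s ns r"] unfolding Sring_def polys_in_vars_def .

lemma subring_Aring: "is_subring (Aring r)"
  using subring_polys_in_vars[of "\<lambda>v. \<exists>l. v = T l \<and> l < r"] unfolding Aring_def polys_in_vars_def .

lemma Aring_subset_Sring: "Aring r \<subseteq> Sring s ns r"
  unfolding Aring_def Sring_def by (fastforce simp: valid_var_def)

lemma submodule_restrict_subring:
  "is_submodule C I \<Longrightarrow> C' \<subseteq> C \<Longrightarrow> is_submodule C' I"
  unfolding is_submodule_def by blast

section \<open>The \<open>x\<close>-degree filtration\<close>

definition xdeg_comp :: "nat list \<Rightarrow> nat \<Rightarrow> (var \<Rightarrow>\<^sub>0 nat) \<Rightarrow> nat" where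
  "xdeg_comp ns i m = (\<Sum>j\<le>ns ! i. Poly_Mapping.lookup m (X i j))"

definition xdeg_at_least :: "nat list \<Rightarrow> nat \<Rightarrow> nat \<Rightarrow> ('k::field) mpoly set" where
  "xdeg_at_least ns i d = {f. \<forall>m\<in>Poly_Mapping.keys f. d \<le> xdeg_comp ns i m}"

lemma xdeg_comp_add: "xdeg_comp ns i (a + b) = xdeg_comp ns i a + xdeg_comp ns i b"
  unfolding xdeg_comp_def by (simp add: lookup_add sum.distrib)

lemma xdeg_comp_single:
  "j \<le> ns ! i \<Longrightarrow> xdeg_comp ns i' (Poly_Mapping.single (X i j) 1) = (if i' = i then 1 else 0)"
  unfolding xdeg_comp_def by (auto simp: lookup_single when_def)

lemma xdeg_eq_iff:
  "length nu = s \<Longrightarrow> xdeg s ns m = nu \<longleftrightarrow> (\<forall>i<s. xdeg_comp ns i m = nu ! i)"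
  unfolding xdeg_def xdeg_comp_def by (auto simp: list_eq_iff_nth_eq)

lemma xdeg_at_least_mult:
  "f \<in> xdeg_at_least ns i d \<Longrightarrow> g \<in> xdeg_at_least ns i d' \<Longrightarrow> f * g \<in> xdeg_at_least ns i (d + d')"
  using keys_mult[of f g] unfolding xdeg_at_least_def by (force simp: xdeg_comp_add)

lemma xdeg_at_least_0: "f \<in> xdeg_at_least ns i 0"
  unfolding xdeg_at_least_def by simp

lemma xdeg_at_least_antimono: "d' \<le> d \<Longrightarrow> xdeg_at_least ns i d \<subseteq> xdeg_at_least ns i d'"
  unfolding xdeg_at_least_def by force

lemma submodule_xdeg_at_least: "is_submodule C (xdeg_at_least ns i d)"
  unfolding is_submodule_def
proof (intro conjI ballI)
  show "0 \<in> xdeg_at_least ns i d" unfolding xdeg_at_least_def by simp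
next
  fix x y :: "'k::field mpoly" assume "x \<in> xdeg_at_least ns i d" "y \<in> xdeg_at_least ns i d"
  then show "x + y \<in> xdeg_at_least ns i d" using keys_add[of x y] unfolding xdeg_at_least_def by blast
next
  fix c x :: "'k::field mpoly" assume "x \<in> xdeg_at_least ns i d"
  then show "c * x \<in> xdeg_at_least ns i d"
    using xdeg_at_least_mult[OF xdeg_at_least_0[of c]] by fastforce
qed

lemma xdeg_at_least_prod:
  "(\<And>k. k \<in> K \<Longrightarrow> f k \<in> xdeg_at_least ns i (d k)) \<Longrightarrow> prod f K \<in> xdeg_at_least ns i (sum d K)"
proof (induction K rule: infinite_finite_induct)
  case (insert x F)
  then show ?case using xdeg_at_least_mult[of "f x" ns i "d x" "prod f F" "sum d F"] by simp
qed (auto intro: xdeg_at_least_0)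

lemma Bi_subset_xdeg_at_least: "Bi s ns r i \<subseteq> xdeg_at_least ns i 1"
  unfolding Bi_def
  by (rule gen_ideal_subset[OF submodule_xdeg_at_least])
    (auto simp: xdeg_at_least_def var_poly_def xdeg_comp_def lookup_single when_def)

lemma Birr_subset_xdeg_at_least:
  assumes "i < s" shows "Birr s ns r \<subseteq> xdeg_at_least ns i 1"
  unfolding Birr_def
proof (rule gen_ideal_subset[OF submodule_xdeg_at_least], safe)
  fix b :: "nat \<Rightarrow> 'a mpoly" assume b: "\<forall>i<s. b i \<in> Bi s ns r i"
  have "prod b {..<s} \<in> xdeg_at_least ns i (\<Sum>k<s. if k = i then 1 else 0)"
    using b Bi_subset_xdeg_at_least xdeg_at_least_0 by (intro xdeg_at_least_prod) fastforce
  then show "prod b {..<s} \<in> xdeg_at_least ns i 1" using assms by simp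
qed

lemma ideal_pow_subset_xdeg_at_least:
  assumes "I \<subseteq> xdeg_at_least ns i 1" shows "ideal_pow C I e \<subseteq> xdeg_at_least ns i e"
  unfolding ideal_pow_def
proof (rule gen_ideal_subset[OF submodule_xdeg_at_least], safe)
  fix a :: "nat \<Rightarrow> 'a mpoly" assume "\<forall>i<e. a i \<in> I"
  then have "prod a {..<e} \<in> xdeg_at_least ns i (\<Sum>k<e. 1)"
    using assms by (intro xdeg_at_least_prod) auto
  then show "prod a {..<e} \<in> xdeg_at_least ns i e" by simp
qed

lemma monomial_divisor_of_xdeg:
  "\<forall>i<s. nu ! i \<le> xdeg_comp ns i m \<Longrightarrow>
   \<exists>m'. (\<forall>i<s. xdeg_comp ns i m' = nu ! i) \<and> (\<forall>v. Poly_Mapping.lookup m' v \<le> Poly_Mapping.lookup m v)"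
proof (induction "\<Sum>i<s. xdeg_comp ns i m" arbitrary: m rule: less_induct)
  case less
  show ?case
  proof (cases "\<forall>i<s. xdeg_comp ns i m = nu ! i")
    case True
    then show ?thesis by blast
  next
    case False
    then obtain i where i: "i < s" "nu ! i < xdeg_comp ns i m" using less.prems by force
    then have "\<not> (\<forall>j\<in>{..ns ! i}. Poly_Mapping.lookup m (X i j) = 0)"
      unfolding xdeg_comp_def by (metis less_nat_zero_code sum.neutral)
    then obtain j where j: "j \<le> ns ! i" "0 < Poly_Mapping.lookup m (X i j)" by auto
    define m1 where "m1 = m - Poly_Mapping.single (X i j) 1"
    have m: "m = m1 + Poly_Mapping.single (X i j) 1"
      unfolding m1_def using j
      by (intro poly_mapping_eqI) (auto simp: lookup_add lookup_minus lookup_single when_def)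
    have xdeg_m: "xdeg_comp ns i' m = xdeg_comp ns i' m1 + (if i' = i then 1 else 0)" for i'
      using xdeg_comp_single[OF j(1), of i'] by (subst m, simp only: xdeg_comp_add)
    have "(\<Sum>i<s. xdeg_comp ns i m1) < (\<Sum>i<s. xdeg_comp ns i m)"
      by (rule sum_strict_mono_ex1) (use i in \<open>auto simp: xdeg_m\<close>)
    moreover have "\<forall>i'<s. nu ! i' \<le> xdeg_comp ns i' m1"
    proof (intro allI impI)
      fix i' assume "i' < s"
      then show "nu ! i' \<le> xdeg_comp ns i' m1" using less.prems xdeg_m[of i'] i by (cases "i' = i") auto
    qed
    ultimately obtain m' where m': "\<forall>i<s. xdeg_comp ns i m' = nu ! i"
      "\<forall>v. Poly_Mapping.lookup m' v \<le> Poly_Mapping.lookup m1 v"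
      using less.hyps by blast
    have "Poly_Mapping.lookup m1 v \<le> Poly_Mapping.lookup m v" for v
      unfolding m1_def by (simp add: lookup_minus)
    then show ?thesis using m' le_trans by blast
  qed
qed

lemma poly_mapping_sum_singles:
  "(f::'a \<Rightarrow>\<^sub>0 'b::comm_monoid_add)
     = (\<Sum>m\<in>Poly_Mapping.keys f. Poly_Mapping.single m (Poly_Mapping.lookup f m))"
  by (intro poly_mapping_eqI) (auto simp: lookup_sum lookup_single when_def in_keys_iff)

lemma xdeg_at_least_in_gen_ideal_Spiece:
  assumes f: "f \<in> Sring s ns r" and nu: "length nu = s"
    and deg: "\<forall>i<s. f \<in> xdeg_at_least ns i (nu ! i)"
  shows "f \<in> gen_ideal (Sring s ns r) (Spiece s ns r nu)"
proof -
  let ?S = "Sring s ns r"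
  have I: "is_submodule ?S (gen_ideal ?S (Spiece s ns r nu))"
    by (rule submodule_gen_ideal[OF subring_Sring])
  have "Poly_Mapping.single m (Poly_Mapping.lookup f m) \<in> gen_ideal ?S (Spiece s ns r nu)"
    if m: "m \<in> Poly_Mapping.keys f" for m
  proof -
    have valid: "\<forall>v\<in>Poly_Mapping.keys m. valid_var s ns r v" using f m unfolding Sring_def by blast
    have "\<forall>i<s. nu ! i \<le> xdeg_comp ns i m" using deg m unfolding xdeg_at_least_def by blast
    then obtain m' where m': "\<forall>i<s. xdeg_comp ns i m' = nu ! i"
      "\<forall>v. Poly_Mapping.lookup m' v \<le> Poly_Mapping.lookup m v"
      using monomial_divisor_of_xdeg by blast
    have split: "m = (m - m') + m'" using m'(2)
      by (intro poly_mapping_eqI) (auto simp: lookup_add lookup_minus)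
    have "Poly_Mapping.keys m' \<subseteq> Poly_Mapping.keys m"
      using m'(2) by (auto simp: in_keys_iff) (meson less_le_trans)
    then have gen: "Poly_Mapping.single m' (1::'a) \<in> Spiece s ns r nu"
      unfolding Spiece_def Sring_def using valid m'(1) xdeg_eq_iff[OF nu] by auto
    have "Poly_Mapping.keys (m - m') \<subseteq> Poly_Mapping.keys m"
      by (auto simp: in_keys_iff lookup_minus)
    then have coeff: "Poly_Mapping.single (m - m') (Poly_Mapping.lookup f m) \<in> ?S"
      unfolding Sring_def using valid by auto
    have "Poly_Mapping.single m (Poly_Mapping.lookup f m)
        = Poly_Mapping.single (m - m') (Poly_Mapping.lookup f m) * Poly_Mapping.single m' 1"
      by (subst split) (simp add: mult_single)
    then show ?thesis
      using I coeff gen_ideal_generator[OF subring_Sring gen] unfolding is_submodule_def by metis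
  qed
  then show ?thesis
    by (subst poly_mapping_sum_singles) (intro submodule_sum[OF I])
qed

lemma Birr_subset_Sring: "Birr s ns r \<subseteq> Sring s ns r"
proof -
  have "Bi s ns r i \<subseteq> Sring s ns r" if "i < s" for i
    unfolding Bi_def using that
    by (intro gen_ideal_subset_subring[OF subring_Sring])
      (auto simp: var_poly_def Sring_def valid_var_def)
  then show ?thesis
    unfolding Birr_def
    by (intro gen_ideal_subset_subring[OF subring_Sring]) (auto intro!: subring_prod[OF subring_Sring])
qed

lemma Birr_pow_subset_gen_ideal_Spiece:
  assumes nu: "length nu = s"
  shows "ideal_pow (Sring s ns r) (Birr s ns r) (sum_list nu) \<subseteq> gen_ideal (Sring s ns r) (Spiece s ns r nu)"
proof
  fix b assume b: "b \<in> ideal_pow (Sring s ns r) (Birr s ns r) (sum_list nu)"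
  have "ideal_pow (Sring s ns r) (Birr s ns r) (sum_list nu) \<subseteq> Sring s ns r"
    unfolding ideal_pow_def using Birr_subset_Sring[of s ns r]
    by (intro gen_ideal_subset_subring[OF subring_Sring]) (auto intro!: subring_prod[OF subring_Sring])
  then have "b \<in> Sring s ns r" using b by blast
  moreover have "b \<in> xdeg_at_least ns i (nu ! i)" if "i < s" for i
    using b ideal_pow_subset_xdeg_at_least[OF Birr_subset_xdeg_at_least[OF that]]
      xdeg_at_least_antimono[OF elem_le_sum_list] that nu by fastforce
  ultimately show "b \<in> gen_ideal (Sring s ns r) (Spiece s ns r nu)"
    using xdeg_at_least_in_gen_ideal_Spiece nu by blast
qed

section \<open>Saturation and annihilator\<close>

lemma Aring_mult_Spiece:
  assumes a: "a \<in> Aring r" and f: "f \<in> Spiece s ns r nu"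
  shows "a * f \<in> Spiece s ns r nu"
proof -
  have "a * f \<in> Sring s ns r"
    using a f Aring_subset_Sring subring_Sring unfolding Spiece_def is_subring_def by blast
  moreover have "xdeg s ns m = nu" if m: "m \<in> Poly_Mapping.keys (a * f)" for m
  proof -
    obtain ma mf where mamf: "m = ma + mf" "ma \<in> Poly_Mapping.keys a" "mf \<in> Poly_Mapping.keys f"
      using keys_mult[of a f] m by blast
    have "X i j \<notin> Poly_Mapping.keys ma" for i j
      using a mamf(2) unfolding Aring_def by blast
    then have "Poly_Mapping.lookup ma (X i j) = 0" for i j
      by (simp add: in_keys_iff)
    then have "xdeg s ns m = xdeg s ns mf"
      unfolding mamf(1) xdeg_def by (simp add: lookup_add)
    moreover have "xdeg s ns mf = nu" using f mamf(3) unfolding Spiece_def by blast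
    ultimately show ?thesis by simp
  qed
  ultimately show ?thesis unfolding Spiece_def by blast
qed

lemma submodule_Spiece: "is_submodule (Aring r) (Spiece s ns r nu :: ('k::field) mpoly set)"
  unfolding is_submodule_def
proof (intro conjI ballI)
  show "0 \<in> Spiece s ns r nu" unfolding Spiece_def Sring_def by simp
next
  fix f g :: "'k mpoly" assume fg: "f \<in> Spiece s ns r nu" "g \<in> Spiece s ns r nu"
  then have "f + g \<in> Sring s ns r"
    using subring_Sring unfolding is_subring_def Spiece_def by blast
  with fg show "f + g \<in> Spiece s ns r nu"
    using keys_add[of f g] unfolding Spiece_def by blast
qed (rule Aring_mult_Spiece)

lemma frakA_subset_ann_piece:
  assumes J: "is_submodule (Sring s ns r) J" and H: "H0B_piece_zero s ns r J nu"
  shows "frakA s ns r J \<subseteq> ann_piece s ns r J nu"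
proof
  fix a assume "a \<in> frakA s ns r J"
  then have a: "a \<in> Aring r" and "\<exists>e. \<forall>b \<in> ideal_pow (Sring s ns r) (Birr s ns r) e. b * a \<in> J"
    unfolding frakA_def saturation_def by auto
  then obtain e where e: "\<forall>b \<in> ideal_pow (Sring s ns r) (Birr s ns r) e. b * a \<in> J" by blast
  have "a * f \<in> J" if f: "f \<in> Spiece s ns r nu" for f
  proof -
    have af: "a * f \<in> Spiece s ns r nu" by (rule Aring_mult_Spiece[OF a f])
    have "b * (a * f) \<in> J" if "b \<in> ideal_pow (Sring s ns r) (Birr s ns r) e" for b
    proof -
      have "f \<in> Sring s ns r" "b * a \<in> J" using f e that unfolding Spiece_def by auto
      then have "f * (b * a) \<in> J" using J unfolding is_submodule_def by blast
      then show ?thesis by (simp add: ac_simps)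
    qed
    then have "a * f \<in> saturation s ns r J"
      using af unfolding saturation_def Spiece_def by blast
    then show ?thesis using H af unfolding H0B_piece_zero_def by blast
  qed
  then show "a \<in> ann_piece s ns r J nu" using a unfolding ann_piece_def by blast
qed

lemma ann_piece_subset_frakA:
  assumes J: "is_submodule (Sring s ns r) J" and nu: "length nu = s"
  shows "ann_piece s ns r J nu \<subseteq> frakA s ns r J"
proof
  fix a assume "a \<in> ann_piece s ns r J nu"
  then have a: "a \<in> Aring r" and ann: "\<forall>f \<in> Spiece s ns r nu. f * a \<in> J"
    unfolding ann_piece_def by (auto simp: mult.commute)
  have "is_submodule (Sring s ns r) {b. b * a \<in> J}"
    using J unfolding is_submodule_def by (auto simp: distrib_right mult.assoc)
  then have "gen_ideal (Sring s ns r) (Spiece s ns r nu) \<subseteq> {b. b * a \<in> J}"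
    using ann by (intro gen_ideal_subset) auto
  then have "\<forall>b \<in> ideal_pow (Sring s ns r) (Birr s ns r) (sum_list nu). b * a \<in> J"
    using Birr_pow_subset_gen_ideal_Spiece[OF nu] by blast
  then show "a \<in> frakA s ns r J"
    using a Aring_subset_Sring unfolding frakA_def saturation_def by blast
qed

lemma ann_piece_eq_annihilator:
  "ann_piece s ns r J nu = annihilator (Aring r) (Spiece s ns r nu) (J \<inter> Spiece s ns r nu)"
  unfolding ann_piece_def annihilator_def by (auto dest: Aring_mult_Spiece)

section \<open>Generators of \<open>S\<^sub>\<nu>\<close> over \<open>A\<close>\<close>

definition is_xvar :: "var \<Rightarrow> bool" where
  "is_xvar v = (case v of X _ _ \<Rightarrow> True | T _ \<Rightarrow> False)"

definition x_part :: "(var \<Rightarrow>\<^sub>0 nat) \<Rightarrow> (var \<Rightarrow>\<^sub>0 nat)" where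
  "x_part m = Abs_poly_mapping (\<lambda>v. if is_xvar v then Poly_Mapping.lookup m v else 0)"

definition t_part :: "(var \<Rightarrow>\<^sub>0 nat) \<Rightarrow> (var \<Rightarrow>\<^sub>0 nat)" where
  "t_part m = Abs_poly_mapping (\<lambda>v. if is_xvar v then 0 else Poly_Mapping.lookup m v)"

lemma lookup_x_part:
  "Poly_Mapping.lookup (x_part m) v = (if is_xvar v then Poly_Mapping.lookup m v else 0)"
proof -
  have "finite {v. (if is_xvar v then Poly_Mapping.lookup m v else 0) \<noteq> 0}"
    by (rule finite_subset[of _ "Poly_Mapping.keys m"]) (auto simp: in_keys_iff)
  then show ?thesis unfolding x_part_def by simp
qed

lemma lookup_t_part:
  "Poly_Mapping.lookup (t_part m) v = (if is_xvar v then 0 else Poly_Mapping.lookup m v)"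
proof -
  have "finite {v. (if is_xvar v then 0 else Poly_Mapping.lookup m v) \<noteq> 0}"
    by (rule finite_subset[of _ "Poly_Mapping.keys m"]) (auto simp: in_keys_iff)
  then show ?thesis unfolding t_part_def by simp
qed

lemma t_part_add_x_part: "t_part m + x_part m = m"
  by (intro poly_mapping_eqI) (simp add: lookup_add lookup_x_part lookup_t_part)

lemma xdeg_x_part: "xdeg s ns (x_part m) = xdeg s ns m"
  unfolding xdeg_def by (simp add: lookup_x_part is_xvar_def)

definition x_monomials :: "nat \<Rightarrow> nat list \<Rightarrow> nat list \<Rightarrow> (var \<Rightarrow>\<^sub>0 nat) set" where
  "x_monomials s ns nu =
     {m. (\<forall>v\<in>Poly_Mapping.keys m. \<exists>i j. v = X i j \<and> i < s \<and> j \<le> ns ! i) \<and> xdeg s ns m = nu}"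

lemma finite_bounded_poly_mappings:
  assumes "finite V"
  shows "finite {m :: 'a \<Rightarrow>\<^sub>0 nat. Poly_Mapping.keys m \<subseteq> V \<and> (\<forall>v. Poly_Mapping.lookup m v \<le> K)}"
    (is "finite ?M")
proof -
  have "inj_on (\<lambda>m. restrict (Poly_Mapping.lookup m) V) ?M"
  proof (rule inj_onI, rule poly_mapping_eqI)
    fix m1 m2 v assume m12: "m1 \<in> ?M" "m2 \<in> ?M"
      and eq: "restrict (Poly_Mapping.lookup m1) V = restrict (Poly_Mapping.lookup m2) V"
    show "Poly_Mapping.lookup m1 v = Poly_Mapping.lookup m2 v"
    proof (cases "v \<in> V")
      case True
      then show ?thesis using fun_cong[OF eq, of v] by simp
    next
      case False
      then have "v \<notin> Poly_Mapping.keys m1" "v \<notin> Poly_Mapping.keys m2" using m12 by auto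
      then show ?thesis by (simp add: in_keys_iff)
    qed
  qed
  moreover have "(\<lambda>m. restrict (Poly_Mapping.lookup m) V) ` ?M \<subseteq> PiE V (\<lambda>_. {0..K})"
    by auto
  then have "finite ((\<lambda>m. restrict (Poly_Mapping.lookup m) V) ` ?M)"
    by (rule finite_subset) (simp add: assms finite_PiE)
  ultimately show ?thesis using finite_imageD by blast
qed

lemma finite_x_monomials:
  assumes nu: "length nu = s" shows "finite (x_monomials s ns nu)"
proof -
  define V where "V = (\<lambda>(i,j). X i j) ` (SIGMA i:{..<s}. {..ns ! i})"
  have "Poly_Mapping.lookup m v \<le> sum_list nu" if m: "m \<in> x_monomials s ns nu" for m v
  proof (cases "v \<in> Poly_Mapping.keys m")
    case True
    then obtain i j where ij: "v = X i j" "i < s" "j \<le> ns ! i" using m unfolding x_monomials_def by blast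
    have "Poly_Mapping.lookup m v \<le> xdeg_comp ns i m"
      unfolding xdeg_comp_def ij(1) by (rule member_le_sum) (use ij in auto)
    also have "\<dots> = nu ! i" using m ij(2) xdeg_eq_iff[OF nu] unfolding x_monomials_def by blast
    also have "\<dots> \<le> sum_list nu" using ij(2) nu by (simp add: elem_le_sum_list)
    finally show ?thesis .
  qed (simp add: in_keys_iff)
  moreover have "Poly_Mapping.keys m \<subseteq> V" if "m \<in> x_monomials s ns nu" for m
    using that unfolding x_monomials_def V_def by force
  ultimately have "x_monomials s ns nu
      \<subseteq> {m. Poly_Mapping.keys m \<subseteq> V \<and> (\<forall>v. Poly_Mapping.lookup m v \<le> sum_list nu)}"
    by blast
  then show ?thesis
    by (rule finite_subset) (rule finite_bounded_poly_mappings, simp add: V_def)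
qed

definition t_coeff :: "('k::field) mpoly \<Rightarrow> (var \<Rightarrow>\<^sub>0 nat) \<Rightarrow> 'k mpoly" where
  "t_coeff f g = (\<Sum>m\<in>{m\<in>Poly_Mapping.keys f. x_part m = g}.
                    Poly_Mapping.single (t_part m) (Poly_Mapping.lookup f m))"

lemma t_coeff_in_Aring: "f \<in> Sring s ns r \<Longrightarrow> t_coeff f g \<in> Aring r"
  unfolding t_coeff_def
  by (rule subring_sum[OF subring_Aring])
    (fastforce simp: Sring_def Aring_def valid_var_def in_keys_iff lookup_t_part is_xvar_def
      split: var.splits if_splits)

lemma Spiece_sum_t_coeff:
  assumes f: "f \<in> Spiece s ns r nu" and nu: "length nu = s"
  shows "f = (\<Sum>g\<in>x_monomials s ns nu. t_coeff f g * Poly_Mapping.single g 1)"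
proof -
  have x_part_mem: "x_part m \<in> x_monomials s ns nu" if m: "m \<in> Poly_Mapping.keys f" for m
    using f m xdeg_x_part[of s ns m]
    by (fastforce simp: Spiece_def Sring_def x_monomials_def valid_var_def in_keys_iff lookup_x_part
        is_xvar_def split: var.splits if_splits)
  have "(\<Sum>g\<in>x_monomials s ns nu. t_coeff f g * Poly_Mapping.single g 1)
      = (\<Sum>g\<in>x_monomials s ns nu. \<Sum>m\<in>{m\<in>Poly_Mapping.keys f. x_part m = g}.
           Poly_Mapping.single m (Poly_Mapping.lookup f m))"
    unfolding t_coeff_def sum_distrib_right
    by (intro sum.cong refl) (auto simp: mult_single t_part_add_x_part)
  also have "\<dots> = (\<Sum>m\<in>Poly_Mapping.keys f. Poly_Mapping.single m (Poly_Mapping.lookup f m))"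
    by (rule sum.group) (use finite_x_monomials[OF nu] x_part_mem in auto)
  also have "\<dots> = f" by (rule poly_mapping_sum_singles[symmetric])
  finally show ?thesis by simp
qed

lemma generates_Spiece:
  assumes nu: "length nu = s" and N: "0 \<in> N"
  shows "\<exists>gs. generates (Aring r) (Spiece s ns r nu) N (gs :: ('k::field) mpoly list)"
proof -
  obtain L where L: "distinct L" "set L = x_monomials s ns nu"
    using finite_distinct_list[OF finite_x_monomials[OF nu]] by blast
  define gs :: "'k mpoly list" where "gs = map (\<lambda>g. Poly_Mapping.single g 1) L"
  have "set gs \<subseteq> Spiece s ns r nu"
    using L unfolding gs_def Spiece_def Sring_def x_monomials_def valid_var_def by force
  moreover have "\<exists>a. (\<forall>i<length gs. a i \<in> Aring r) \<and> f - (\<Sum>i<length gs. a i * gs ! i) \<in> N"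
    if f: "f \<in> Spiece s ns r nu" for f
  proof (intro exI conjI allI impI)
    show "t_coeff f (L ! i) \<in> Aring r" for i
      using f t_coeff_in_Aring unfolding Spiece_def by blast
    have "(\<Sum>i<length gs. t_coeff f (L ! i) * gs ! i)
        = (\<Sum>g\<in>x_monomials s ns nu. t_coeff f g * Poly_Mapping.single g 1)"
    proof -
      have "(\<Sum>i<length gs. t_coeff f (L ! i) * gs ! i)
          = sum_list (map (\<lambda>g. t_coeff f g * Poly_Mapping.single g 1) L)"
        by (simp add: gs_def sum_list_sum_nth atLeast0LessThan)
      then show ?thesis using L by (simp add: sum_list_distinct_conv_sum_set)
    qed
    then show "f - (\<Sum>i<length gs. t_coeff f (L ! i) * gs ! i) \<in> N"
      using Spiece_sum_t_coeff[OF f nu] N by simp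
  qed
  ultimately show ?thesis unfolding generates_def by blast
qed

theorem mainTheorem3:
  fixes s r :: nat and ns nu :: "nat list" and G :: "('k::field) mpoly set"
    and J :: "'k mpoly set"
  assumes "length ns = s"
    and "finite G"
    and "G \<subseteq> Sring s ns r"
    and "\<forall>g \<in> G. \<exists>mu t. homog s ns r mu t g"
    and "J = gen_ideal (Sring s ns r) G"
    and "length nu = s"
    and "H0B_piece_zero s ns r J nu"
  shows "frakA s ns r J = ann_piece s ns r J nu
    \<and> (\<exists>n::nat. ideal_pow (Aring r) (frakA s ns r J) n
          \<subseteq> fitt0 (Aring r) (Spiece s ns r nu) (J \<inter> Spiece s ns r nu)
        \<and> fitt0 (Aring r) (Spiece s ns r nu) (J \<inter> Spiece s ns r nu) \<subseteq> frakA s ns r J)"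
proof -
  let ?A = "Aring r" and ?P = "Spiece s ns r nu"
  let ?N = "J \<inter> ?P"
  have J: "is_submodule (Sring s ns r) J"
    unfolding assms(5) by (rule submodule_gen_ideal[OF subring_Sring])
  have N: "is_submodule ?A ?N"
    by (rule submodule_Int[OF submodule_restrict_subring[OF J Aring_subset_Sring] submodule_Spiece])
  have frakA: "frakA s ns r J = ann_piece s ns r J nu"
    using frakA_subset_ann_piece[OF J assms(7)] ann_piece_subset_frakA[OF J assms(6)] by blast
  define gs where "gs = (SOME gs. generates ?A ?P ?N gs)"
  have gs: "generates ?A ?P ?N gs"
    unfolding gs_def using generates_Spiece[OF assms(6)] N unfolding is_submodule_def
    by (metis someI_ex)
  have "fitt0 ?A ?P ?N = fitt0_wrt ?A ?N gs" unfolding fitt0_def gs_def ..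
  then show ?thesis
    unfolding frakA ann_piece_eq_annihilator
    using annihilator_pow_subset_fitt0_wrt[OF subring_Aring gs]
      fitt0_wrt_subset_annihilator[OF subring_Aring N gs]
    by (intro conjI exI[of _ "length gs"] refl) simp_all
qed

end
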